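(* Assume the Standing Assumptions in the context, with $\alpha\in(2/3,1)$ and $1<M<1+\frac{3\alpha-2}{\alpha(2-\alpha)}$, and let $u$ be the classical solution of $\partial_t u-\nabla\cdot(a(u)\nabla u)=\sigma(u)\xi-\sigma'(u)\sigma(u)C^{a(u)}$ on $(0,\infty)\times\mathbb{T}^d$, $u(0)=u_0$. Let $\varphi^>:[0,\infty)\to[0,1]$ be smooth, vanishing on $[0,1]$, equal to $1$ on $[2,\infty)$, $\varphi^<=1-\varphi^>$, and for $\delta>0$ let $\Pi^<_{\mathbf x}[\mathcal I\Xi;\bar a](\mathbf y)=\varphi^<(\bar a/\delta)\Pi_{\mathbf x}[\mathcal I\Xi;\bar a](\mathbf y)$. Let $R,T>0$. Then for all $\mathbf y$ with $\|\mathbf y\|_{\mathfrak s}\le R$, $$\int_{D_{\mathbf y}}\big|\sigma(u(\mathbf x))\Pi^<_{\mathbf x}[\mathcal I\Xi;a(u(\mathbf x))](\mathbf x+\mathbf y)\big|\,d\mathbf x\le K\,[\mathcal I\Xi]_\alpha\|\mathbf y\|_{\mathfrak s}^\alpha\,T\,\delta^{1/(M-1)},$$ where $K$ depends only on $C$ (and $M,N,\epsilon$), and $D_{\mathbf y}=\{\mathbf x\in[0,T]\times\mathbb{T}^d:\mathbf x+\mathbf y\in[0,T]\times\mathbb{T}^d\}$.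
   Context: Notation: $\mathbb{T}^d=\mathbb{R}^d/\mathbb{Z}^d$ (functions identified with $1$-periodic functions on $\mathbb{R}^d$); $\mathbf{x}=(t,x),\mathbf y=(s,y),\mathbf z=(r,z)$; $\|(t,x)\|_{\mathfrak s}=(|t|+|x|^2)^{1/2}$; $\varphi^\lambda_{(t,x)}(s,y)=\lambda^{-d-2}\varphi((s-t)/\lambda^2,(y-x)/\lambda)$; $\mathcal B$ = smooth functions supported in the parabolic unit ball with derivatives up to order 2 bounded by 1; $\Phi$ the heat kernel $(4\pi t)^{-d/2}e^{-|x|^2/(4t)}\mathbb 1_{t>0}$, $\Psi(\bar a,(t,x))=\Phi(\bar a t,x)$. Standing Assumptions: $\alpha\in(2/3,1)$, $M>1$, $N\ge M+1$, $p>1$, $C>0$, fixed small $\epsilon>0$. $a\in C^2$, $a\ge a_0>0$, $|v|^{M-1}\le Ca(v)$, $|a'(v)|\le C|v|^{M-2}$, $|a''(v)|\le C|v|^{M-3}$ ($v\ne0$); $\sigma\in C^2$ supported in $[-C,C]$ with $|\sigma^{(j)}(v)|\le C|v|^{N-j}$, $j=0,1,2$. $\xi$ smooth on $\mathbb{R}\times\mathbb{T}^d$, $\Pi_{\mathbf x}[\mathcal I\Xi;\bar a](\mathbf y)=\int_{(0,\infty)\times\mathbb{R}^d}(\Psi(\bar a,\mathbf y-\mathbf z)-\Psi(\bar a,\mathbf x-\mathbf z))\xi(\mathbf z)d\mathbf z$; further symbols $\Pi_{\mathbf x}[\Xi]=\xi$, $\Pi_{\mathbf x}[\Xi\mathcal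 I\Xi;\bar a](\mathbf y)=\Pi_{\mathbf x}[\mathcal I\Xi;\bar a](\mathbf y)\xi(\mathbf y)-c_1^{\bar a}(s)$, $\Pi_{\mathbf x}[(\nabla\mathcal I\Xi)^2;\bar a](\mathbf y)=|\nabla_y\Pi_{\mathbf x}[\mathcal I\Xi;\bar a](\mathbf y)|^2-c_2^{\bar a}(s)$, $\Pi_{\mathbf x}[X\Xi](\mathbf y)=(y-x)\xi(\mathbf y)$ with given counterterms $c_1,c_2$, and $(|\tau|,\mathfrak e(\tau))$ equal to $(\alpha-2,0),(2\alpha-2,1+\epsilon),(2\alpha-2,2+2\epsilon),(\alpha-1,0),(\alpha,1+\epsilon)$ for $\Xi,\Xi\mathcal I\Xi,(\nabla\mathcal I\Xi)^2,X\Xi,\mathcal I\Xi$. Model bounds: for each compact $\mathfrak K$ there are constants $[\tau]_{|\tau|}$ with $|\langle\partial^m_{\bar a}\Pi_{\mathbf x}[\tau;\bar a],\varphi^\lambda_{\mathbf x}\rangle|\le[\tau]_{|\tau|}\lambda^{|\tau|}\bar a^{-\mathfrak e(\tau)-m}$ and $|\partial^m_{\bar a}\Pi_{\mathbf x}[\mathcal I\Xi;\bar a](\mathbf y)|\le[\mathcal I\Xi]_\alpha\|\mathbf x-\mathbf y\|_{\mathfrak s}^\alpha\bar a^{-1-\epsilon-m}$ uniformly for $\mathbf x,\mathbf y\in\mathfrak K$, $\lambda\in(0,1)$, $\bar a\in a(\mathrm{supp}\,\sigma)\setminus\{0\}$, $m\in\{0,1\}$, $\varphi\in\mathcal B$.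 Counterterm $C^{\bar a}$ with $\int_0^T\sup_v|\sigma'\sigma(v)(C^{a(v)}-c_1^{a(v)}(t))|dt\le C$ and $\int_0^T\sup_v|\sigma^2(v)/v(c_1^{a(v)}(t)-a(v)c_2^{a(v)}(t))|dt\le C$. $u_0$ smooth with $\|u_0\|_{L^p}\le C$. *)

theory Defs
  imports "HOL-Analysis.Analysis"
begin

text \<open>Space-time points are pairs (t, x) :: real \<times> (real^'d); functions on the torus
  are 1-periodic functions on real^'d.\<close>

definition pnorm :: "real \<times> (real^'d) \<Rightarrow> real" where
  "pnorm z = sqrt (\<bar>fst z\<bar> + (norm (snd z))\<^sup>2)"

definition unit_cell :: "(real^'d) set" where
  "unit_cell = {x. \<forall>i. 0 \<le> x $ i \<and> x $ i < 1}"

definition periodic_sp :: "(real^'d \<Rightarrow> 'b) \<Rightarrow> bool" where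
  "periodic_sp f \<longleftrightarrow> (\<forall>x i. f (x + axis i 1) = f x)"

definition periodic_st :: "(real \<times> (real^'d) \<Rightarrow> 'b) \<Rightarrow> bool" where
  "periodic_st f \<longleftrightarrow> (\<forall>t x i. f (t, x + axis i 1) = f (t, x))"

definition dir_deriv :: "'a::real_normed_vector \<Rightarrow> ('a \<Rightarrow> real) \<Rightarrow> 'a \<Rightarrow> real" where
  "dir_deriv v f x = deriv (\<lambda>h. f (x + h *\<^sub>R v)) 0"

definition smooth :: "('a::real_normed_vector \<Rightarrow> real) \<Rightarrow> bool" where
  "smooth f \<longleftrightarrow> (\<forall>vs. foldr dir_deriv vs f differentiable_on UNIV)"

definition C2 :: "(real \<Rightarrow> real) \<Rightarrow> bool" where
  "C2 f \<longleftrightarrow> (\<forall>v. f differentiable at v) \<and> (\<forall>v. deriv f differentiable at v)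
              \<and> continuous_on UNIV (deriv (deriv f))"

definition heat :: "real \<times> (real^'d) \<Rightarrow> real" where
  "heat z = (if fst z > 0
     then (4 * pi * fst z) powr (- real CARD('d) / 2) * exp (- (norm (snd z))\<^sup>2 / (4 * fst z))
     else 0)"

definition Psi :: "real \<Rightarrow> real \<times> (real^'d) \<Rightarrow> real" where
  "Psi ab z = heat (ab * fst z, snd z)"

definition PiI :: "(real \<times> (real^'d) \<Rightarrow> real) \<Rightarrow> real \<Rightarrow> real \<times> (real^'d) \<Rightarrow> real \<times> (real^'d) \<Rightarrow> real" where
  "PiI \<xi> ab x y = (LINT z : {z. fst z > 0} | lborel. (Psi ab (y - z) - Psi ab (x - z)) * \<xi> z)"

definition dt :: "(real \<times> (real^'d) \<Rightarrow> real) \<Rightarrow> real \<times> (real^'d) \<Rightarrow> real" where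
  "dt f z = deriv (\<lambda>s. f (s, snd z)) (fst z)"

definition dxi :: "'d \<Rightarrow> (real \<times> (real^'d) \<Rightarrow> real) \<Rightarrow> real \<times> (real^'d) \<Rightarrow> real" where
  "dxi i f z = deriv (\<lambda>h. f (fst z, snd z + h *\<^sub>R axis i 1)) 0"

definition classical_solution ::
  "(real \<Rightarrow> real) \<Rightarrow> (real \<Rightarrow> real) \<Rightarrow> (real \<times> (real^'d) \<Rightarrow> real) \<Rightarrow> (real \<Rightarrow> real)
   \<Rightarrow> (real^'d \<Rightarrow> real) \<Rightarrow> (real \<times> (real^'d) \<Rightarrow> real) \<Rightarrow> bool" where
  "classical_solution a \<sigma> \<xi> Cc u0 u \<longleftrightarrow>
     periodic_st u \<and>
     continuous_on {z. fst z \<ge> 0} u \<and>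
     (\<forall>x. u (0, x) = u0 x) \<and>
     (\<forall>z. fst z > 0 \<longrightarrow>
        (\<lambda>s. u (s, snd z)) differentiable (at (fst z)) \<and>
        (\<forall>i. (\<lambda>h. u (fst z, snd z + h *\<^sub>R axis i 1)) differentiable (at 0)) \<and>
        (\<forall>i. (\<lambda>h. a (u (fst z, snd z + h *\<^sub>R axis i 1)) * dxi i u (fst z, snd z + h *\<^sub>R axis i 1))
               differentiable (at 0))) \<and>
     continuous_on {z. fst z > 0} (dt u) \<and>
     (\<forall>i. continuous_on {z. fst z > 0} (dxi i u)) \<and>
     (\<forall>i. continuous_on {z. fst z > 0} (dxi i (dxi i u))) \<and>
     (\<forall>z. fst z > 0 \<longrightarrow>
        dt u z = (\<Sum>i\<in>UNIV. dxi i (\<lambda>w. a (u w) * dxi i u w) z)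
                 + \<sigma> (u z) * \<xi> z - deriv \<sigma> (u z) * \<sigma> (u z) * Cc (a (u z)))"

definition a_assms :: "real \<Rightarrow> real \<Rightarrow> (real \<Rightarrow> real) \<Rightarrow> bool" where
  "a_assms C M a \<longleftrightarrow> C2 a \<and> (\<exists>a0>0. \<forall>v. a v \<ge> a0) \<and>
     (\<forall>v. \<bar>v\<bar> powr (M - 1) \<le> C * a v) \<and>
     (\<forall>v. v \<noteq> 0 \<longrightarrow> \<bar>deriv a v\<bar> \<le> C * \<bar>v\<bar> powr (M - 2)) \<and>
     (\<forall>v. v \<noteq> 0 \<longrightarrow> \<bar>deriv (deriv a) v\<bar> \<le> C * \<bar>v\<bar> powr (M - 3))"

definition sigma_assms :: "real \<Rightarrow> real \<Rightarrow> (real \<Rightarrow> real) \<Rightarrow> bool" where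
  "sigma_assms C N \<sigma> \<longleftrightarrow> C2 \<sigma> \<and> (\<forall>v. \<bar>v\<bar> > C \<longrightarrow> \<sigma> v = 0) \<and>
     (\<forall>v. \<bar>\<sigma> v\<bar> \<le> C * \<bar>v\<bar> powr N) \<and>
     (\<forall>v. \<bar>deriv \<sigma> v\<bar> \<le> C * \<bar>v\<bar> powr (N - 1)) \<and>
     (\<forall>v. \<bar>deriv (deriv \<sigma>) v\<bar> \<le> C * \<bar>v\<bar> powr (N - 2))"

definition supp :: "(real \<Rightarrow> real) \<Rightarrow> real set" where
  "supp f = closure {v. f v \<noteq> 0}"

definition IXi_bound ::
  "real \<Rightarrow> real \<Rightarrow> (real \<Rightarrow> real) \<Rightarrow> (real \<Rightarrow> real) \<Rightarrow> (real \<times> (real^'d) \<Rightarrow> real)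
   \<Rightarrow> (real \<times> (real^'d)) set \<Rightarrow> real \<Rightarrow> bool" where
  "IXi_bound \<alpha> \<epsilon> a \<sigma> \<xi> Kset c \<longleftrightarrow>
     (\<forall>x\<in>Kset. \<forall>y\<in>Kset. \<forall>ab \<in> a ` supp \<sigma> - {0}.
        \<bar>PiI \<xi> ab x y\<bar> \<le> c * pnorm (x - y) powr \<alpha> * ab powr (-1 - \<epsilon>) \<and>
        \<bar>deriv (\<lambda>b. PiI \<xi> b x y) ab\<bar> \<le> c * pnorm (x - y) powr \<alpha> * ab powr (-2 - \<epsilon>))"

definition cutoff :: "(real \<Rightarrow> real) \<Rightarrow> bool" where
  "cutoff \<phi> \<longleftrightarrow> smooth \<phi> \<and> (\<forall>s\<ge>0. 0 \<le> \<phi> s \<and> \<phi> s \<le> 1) \<and>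
     (\<forall>s. 0 \<le> s \<and> s \<le> 1 \<longrightarrow> \<phi> s = 0) \<and> (\<forall>s\<ge>2. \<phi> s = 1)"

text \<open>D_y = {x \<in> [0,T] \<times> T^d : x + y \<in> [0,T] \<times> T^d}, torus represented by the unit cell.\<close>
definition Dom :: "real \<Rightarrow> real \<times> (real^'d) \<Rightarrow> (real \<times> (real^'d)) set" where
  "Dom T y = {x. 0 \<le> fst x \<and> fst x \<le> T \<and> 0 \<le> fst x + fst y \<and> fst x + fst y \<le> T
                 \<and> snd x \<in> unit_cell}"

end

theory Submission imports Defs begin

text \<open>Where the cutoff 1 - \<phi>(a(u)/\<delta>) is nonzero we have a(u) < 2\<delta>, and the growth condition
  |u|^(M-1) \<le> C a(u) turns this into |u| \<le> (2 C \<delta>)^(1/(M-1)). The model bound for I\<Xi> costs a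
  factor a(u)^(-1-\<epsilon>) \<le> C^(1+\<epsilon>) |u|^(-(M-1)(1+\<epsilon>)), which is absorbed by |\<sigma>(u)| \<le> C |u|^N
  as long as N - (M-1)(1+\<epsilon>) \<ge> 1; this holds for \<epsilon> < 1/(M-1) because N \<ge> M + 1. So the
  integrand is bounded pointwise by a multiple of c |y|^\<alpha> \<delta>^(1/(M-1)), and D_y has measure
  at most T.\<close>

lemma le_powr_inverse_if_powr_le:
  fixes w b q :: real
  assumes "q > 0" and "w \<ge> 0" and "w powr q \<le> b"
  shows "w \<le> b powr (1 / q)"
proof -
  have "w = (w powr q) powr (1 / q)"
    using assms(1,2) by (simp add: powr_powr powr_one)
  also have "\<dots> \<le> b powr (1 / q)"
    using assms by (intro powr_mono2) auto
  finally show ?thesis .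
qed

lemma state_le_if_diffusivity_le:
  fixes C M A \<delta> w :: real
  assumes "M > 1" and "C > 0" and "w \<ge> 0"
    and growth: "w powr (M - 1) \<le> C * A" and small: "A \<le> 2 * \<delta>"
  shows "w \<le> (2 * C) powr (1 / (M - 1)) * \<delta> powr (1 / (M - 1))"
proof -
  have "C * A \<le> C * (2 * \<delta>)"
    using small \<open>C > 0\<close> by (intro mult_left_mono) auto
  then have "w powr (M - 1) \<le> 2 * C * \<delta>"
    using growth by linarith
  then have "w \<le> (2 * C * \<delta>) powr (1 / (M - 1))"
    using assms(1,3) by (intro le_powr_inverse_if_powr_le) auto
  moreover have "\<delta> \<ge> 0"
    using \<open>w powr (M - 1) \<le> 2 * C * \<delta>\<close> \<open>C > 0\<close>
    by (smt (verit) mult_pos_neg powr_ge_zero)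
  ultimately show ?thesis
    using \<open>C > 0\<close> by (simp add: powr_mult)
qed

lemma diffusivity_powr_neg_le:
  fixes C M A w \<epsilon> :: real
  assumes "C > 0" and "w > 0" and "\<epsilon> \<ge> 0" and growth: "w powr (M - 1) \<le> C * A"
  shows "A powr (-1 - \<epsilon>) \<le> C powr (1 + \<epsilon>) * w powr (- (M - 1) * (1 + \<epsilon>))"
proof -
  have "w powr (M - 1) / C \<le> A"
    using growth assms(1) by (simp add: field_simps)
  then have "A powr (-1 - \<epsilon>) \<le> (w powr (M - 1) / C) powr (-1 - \<epsilon>)"
    using assms(1-3) by (intro powr_mono2') auto
  also have "\<dots> = C powr (1 + \<epsilon>) * w powr (- (M - 1) * (1 + \<epsilon>))"
    using assms(1,2)
    by (simp add: powr_divide powr_powr powr_minus_divide divide_powr_uminus algebra_simps)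
  finally show ?thesis .
qed

lemma noise_times_model_bound_le:
  fixes C M N \<epsilon> A b s P w \<delta> :: real
  assumes M: "M > 1" and N: "N \<ge> M + 1" and "\<epsilon> \<ge> 0" and \<epsilon>M: "(M - 1) * \<epsilon> \<le> 1"
    and "C > 0" and "0 < w" and "w \<le> C" and noise: "\<bar>s\<bar> \<le> C * w powr N"
    and growth: "w powr (M - 1) \<le> C * A" and small: "A \<le> 2 * \<delta>"
    and model: "\<bar>P\<bar> \<le> b * A powr (-1 - \<epsilon>)"
  shows "\<bar>s\<bar> * \<bar>P\<bar> \<le> C powr (N + (2 - M) * (1 + \<epsilon>)) * (2 * C) powr (1 / (M - 1)) * b
           * \<delta> powr (1 / (M - 1))"
proof -
  define e where "e = N - (M - 1) * (1 + \<epsilon>)"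
  define r where "r = 1 / (M - 1)"
  have "(M - 1) * (1 + \<epsilon>) = (M - 1) + (M - 1) * \<epsilon>"
    by (simp add: algebra_simps)
  then have "e \<ge> 1"
    using N \<epsilon>M by (simp add: e_def)
  have "0 < C * A"
    using growth \<open>w > 0\<close> by (smt (verit) powr_gt_zero)
  then have "A > 0"
    using \<open>C > 0\<close> by (simp add: zero_less_mult_iff)
  have "0 \<le> b * A powr (-1 - \<epsilon>)"
    using model abs_ge_zero order_trans by blast
  then have "b \<ge> 0"
    using \<open>A > 0\<close> by (simp add: zero_le_mult_iff)
  have "\<bar>P\<bar> \<le> b * (C powr (1 + \<epsilon>) * w powr (- (M - 1) * (1 + \<epsilon>)))"
    using order_trans[OF model mult_left_mono[OF diffusivity_powr_neg_le \<open>b \<ge> 0\<close>]]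
      \<open>C > 0\<close> \<open>w > 0\<close> \<open>\<epsilon> \<ge> 0\<close> growth
    by blast
  then have "\<bar>s\<bar> * \<bar>P\<bar>
      \<le> (C * w powr N) * (b * (C powr (1 + \<epsilon>) * w powr (- (M - 1) * (1 + \<epsilon>))))"
    using noise \<open>C > 0\<close> by (intro mult_mono) auto
  also have "\<dots> = b * (C * C powr (1 + \<epsilon>)) * (w powr N * w powr (- (M - 1) * (1 + \<epsilon>)))"
    by (simp only: ac_simps)
  also have "C * C powr (1 + \<epsilon>) = C powr (2 + \<epsilon>)"
    using \<open>C > 0\<close> by (simp add: powr_add power2_eq_square)
  also have "w powr N * w powr (- (M - 1) * (1 + \<epsilon>)) = w powr ((e - 1) + 1)"
    unfolding powr_add[symmetric] by (simp add: e_def algebra_simps)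
  also have "\<dots> = w powr (e - 1) * w"
    using \<open>w > 0\<close> by (subst powr_add) simp
  also have "b * C powr (2 + \<epsilon>) * (w powr (e - 1) * w)
      \<le> b * C powr (2 + \<epsilon>) * (C powr (e - 1) * ((2 * C) powr r * \<delta> powr r))"
  proof -
    have "w powr (e - 1) \<le> C powr (e - 1)"
      using \<open>e \<ge> 1\<close> \<open>w > 0\<close> \<open>w \<le> C\<close> by (intro powr_mono2) auto
    moreover have "w \<le> (2 * C) powr r * \<delta> powr r"
      unfolding r_def using \<open>w > 0\<close> by (intro state_le_if_diffusivity_le[OF M \<open>C > 0\<close> _ growth small]) simp
    ultimately have "w powr (e - 1) * w \<le> C powr (e - 1) * ((2 * C) powr r * \<delta> powr r)"
      using \<open>w > 0\<close> by (intro mult_mono) auto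
    then show ?thesis
      using \<open>b \<ge> 0\<close> \<open>C > 0\<close> by (intro mult_left_mono) auto
  qed
  also have "\<dots> = C powr (N + (2 - M) * (1 + \<epsilon>)) * (2 * C) powr r * b * \<delta> powr r"
  proof -
    have "2 + \<epsilon> + (e - 1) = N + (2 - M) * (1 + \<epsilon>)"
      by (simp add: e_def algebra_simps)
    then have "C powr (N + (2 - M) * (1 + \<epsilon>)) = C powr (2 + \<epsilon>) * C powr (e - 1)"
      by (metis powr_add)
    then show ?thesis by (simp only: ac_simps)
  qed
  finally show ?thesis
    by (simp only: r_def)
qed

lemma cutoff_complement_bounds:
  assumes "cutoff \<phi>" and "s \<ge> 0"
  shows "0 \<le> 1 - \<phi> s" and "1 - \<phi> s \<le> 1"
  using assms unfolding cutoff_def by auto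

lemma less_two_if_cutoff_complement_nonzero:
  assumes "cutoff \<phi>" and "1 - \<phi> s \<noteq> 0"
  shows "s < 2"
  using assms unfolding cutoff_def by (cases "s < 2") auto

lemma IXi_bound_where_sigma_nonzero:
  assumes "IXi_bound \<alpha> \<epsilon> a \<sigma> \<xi> Kset c" and "x \<in> Kset" and "x + y \<in> Kset"
    and "\<sigma> v \<noteq> 0" and "a v \<noteq> 0"
  shows "\<bar>PiI \<xi> (a v) x (x + y)\<bar> \<le> c * pnorm y powr \<alpha> * a v powr (-1 - \<epsilon>)"
proof -
  have "v \<in> supp \<sigma>"
    unfolding supp_def by (rule closure_subset[THEN subsetD]) (simp add: assms(4))
  then have "a v \<in> a ` supp \<sigma> - {0}"
    using assms(5) by blast
  from assms(1)[unfolded IXi_bound_def, rule_format, OF assms(2,3) this]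
  have "\<bar>PiI \<xi> (a v) x (x + y)\<bar> \<le> c * pnorm (x - (x + y)) powr \<alpha> * a v powr (-1 - \<epsilon>)"
    by (rule conjunct1)
  moreover have "pnorm (x - (x + y)) = pnorm y"
    by (simp add: pnorm_def)
  ultimately show ?thesis
    by simp
qed

lemma cutoff_integrand_le:
  fixes v :: real and x y :: "real \<times> (real^'d)"
  assumes M: "M > 1" and N: "N \<ge> M + 1" and "0 \<le> \<epsilon>" and \<epsilon>M: "(M - 1) * \<epsilon> \<le> 1"
    and "C > 0" and a: "a_assms C M a" and \<sigma>: "sigma_assms C N \<sigma>" and \<phi>: "cutoff \<phi>"
    and "\<delta> > 0" and IB: "IXi_bound \<alpha> \<epsilon> a \<sigma> \<xi> Kset c" and "x \<in> Kset" and "x + y \<in> Kset"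
  shows "ennreal \<bar>\<sigma> v * ((1 - \<phi> (a v / \<delta>)) * PiI \<xi> (a v) x (x + y))\<bar>
    \<le> ennreal (C powr (N + (2 - M) * (1 + \<epsilon>)) * (2 * C) powr (1 / (M - 1)) * (c * pnorm y powr \<alpha>)
              * \<delta> powr (1 / (M - 1)))"
proof (cases "\<sigma> v = 0 \<or> 1 - \<phi> (a v / \<delta>) = 0")
  case True
  then show ?thesis by auto
next
  case False
  then have "\<sigma> v \<noteq> 0" and cut: "1 - \<phi> (a v / \<delta>) \<noteq> 0" by auto
  obtain a0 where "a0 > 0" and "\<forall>v. a v \<ge> a0"
    using a unfolding a_assms_def by blast
  then have "a v > 0" by (meson less_le_trans)
  have "a v / \<delta> < 2"
    using less_two_if_cutoff_complement_nonzero[OF \<phi> cut] .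
  then have small: "a v \<le> 2 * \<delta>"
    using \<open>\<delta> > 0\<close> by (simp add: field_simps)
  have growth: "\<bar>v\<bar> powr (M - 1) \<le> C * a v"
    using a unfolding a_assms_def by blast
  have noise: "\<bar>\<sigma> v\<bar> \<le> C * \<bar>v\<bar> powr N" and "\<bar>v\<bar> \<le> C"
    using \<sigma> \<open>\<sigma> v \<noteq> 0\<close> unfolding sigma_assms_def by (blast, force)
  have "\<bar>v\<bar> > 0"
    using noise \<open>\<sigma> v \<noteq> 0\<close> by (cases "v = 0") auto
  have "0 \<le> 1 - \<phi> (a v / \<delta>)" and "1 - \<phi> (a v / \<delta>) \<le> 1"
    using cutoff_complement_bounds[OF \<phi>] \<open>a v > 0\<close> \<open>\<delta> > 0\<close> by simp_all
  then have "\<bar>\<sigma> v * ((1 - \<phi> (a v / \<delta>)) * PiI \<xi> (a v) x (x + y))\<bar>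
      \<le> \<bar>\<sigma> v\<bar> * \<bar>PiI \<xi> (a v) x (x + y)\<bar>"
    by (simp add: abs_mult mult_left_le_one_le mult_left_mono)
  also have "\<dots> \<le> C powr (N + (2 - M) * (1 + \<epsilon>)) * (2 * C) powr (1 / (M - 1)) * (c * pnorm y powr \<alpha>)
              * \<delta> powr (1 / (M - 1))"
    using IXi_bound_where_sigma_nonzero[OF IB \<open>x \<in> Kset\<close> \<open>x + y \<in> Kset\<close> \<open>\<sigma> v \<noteq> 0\<close>]
      \<open>a v > 0\<close>
    by (intro noise_times_model_bound_le[OF M N \<open>0 \<le> \<epsilon>\<close> \<epsilon>M \<open>C > 0\<close> \<open>\<bar>v\<bar> > 0\<close>
          \<open>\<bar>v\<bar> \<le> C\<close> noise growth small]) (simp add: mult.assoc)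
  finally show ?thesis
    by (rule ennreal_leI)
qed

lemma Dom_subset_cbox: "Dom T y \<subseteq> cbox (0::real, 0::real^'d) (T, 1)"
  unfolding Dom_def unit_cell_def
  by (auto simp: interval_cbox_cart[symmetric] less_eq_vec_def less_imp_le cbox_Pair_eq)

lemma emeasure_cbox_time_unit_cube:
  assumes "T \<ge> 0"
  shows "emeasure lborel (cbox (0::real, 0::real^'d) (T, 1)) = ennreal T"
proof -
  have "cbox (0::real^'d) 1 \<noteq> {}"
    by (simp add: interval_cbox_cart[symmetric] less_eq_vec_def)
  then have "measure lborel (cbox (0::real, 0::real^'d) (T, 1)) = T"
    unfolding content_Pair using assms content_cbox_cart[of "0::real^'d" 1] by simp
  then show ?thesis
    by (simp add: emeasure_lborel_cbox_eq measure_lborel_cbox_eq)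
qed

lemma nn_integral_Dom_le:
  fixes f :: "real \<times> (real^'d) \<Rightarrow> ennreal"
  assumes "T \<ge> 0" and "\<And>x. x \<in> Dom T y \<Longrightarrow> f x \<le> ennreal B"
  shows "(\<integral>\<^sup>+ x \<in> Dom T y. f x \<partial>lborel) \<le> ennreal (B * T)"
proof -
  have "(\<integral>\<^sup>+ x \<in> Dom T y. f x \<partial>lborel)
      \<le> (\<integral>\<^sup>+ x. ennreal B * indicator (cbox (0::real, 0::real^'d) (T, 1)) x \<partial>lborel)"
    using assms(2) Dom_subset_cbox[of T y] by (intro nn_integral_mono) (auto simp: indicator_def)
  also have "\<dots> = ennreal B * ennreal T"
    using assms(1) by (simp add: nn_integral_cmult_indicator emeasure_cbox_time_unit_cube)
  also have "\<dots> = ennreal (B * T)"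
    using assms(1) by (simp add: ennreal_mult'')
  finally show ?thesis .
qed

lemma set_nn_integral_cutoff_le:
  fixes u :: "real \<times> (real^'d) \<Rightarrow> real"
  assumes "M > 1" and "N \<ge> M + 1" and "0 \<le> \<epsilon>" and "(M - 1) * \<epsilon> \<le> 1" and "C > 0"
    and "a_assms C M a" and "sigma_assms C N \<sigma>" and "cutoff \<phi>" and "\<delta> > 0" and "T \<ge> 0"
    and "\<forall>x\<in>Dom T y. x \<in> Kset \<and> x + y \<in> Kset" and "IXi_bound \<alpha> \<epsilon> a \<sigma> \<xi> Kset c"
  shows "(\<integral>\<^sup>+ x \<in> Dom T y. ennreal \<bar>\<sigma> (u x) * ((1 - \<phi> (a (u x) / \<delta>)) * PiI \<xi> (a (u x)) x (x + y))\<bar> \<partial>lborel)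
    \<le> ennreal (C powr (N + (2 - M) * (1 + \<epsilon>)) * (2 * C) powr (1 / (M - 1))
                * c * pnorm y powr \<alpha> * T * \<delta> powr (1 / (M - 1)))"
proof -
  let ?K = "C powr (N + (2 - M) * (1 + \<epsilon>)) * (2 * C) powr (1 / (M - 1))"
  have "(\<integral>\<^sup>+ x \<in> Dom T y. ennreal \<bar>\<sigma> (u x) * ((1 - \<phi> (a (u x) / \<delta>)) * PiI \<xi> (a (u x)) x (x + y))\<bar> \<partial>lborel)
      \<le> ennreal (?K * (c * pnorm y powr \<alpha>) * \<delta> powr (1 / (M - 1)) * T)"
    using assms(11) cutoff_integrand_le[OF assms(1-9) assms(12)]
    by (intro nn_integral_Dom_le[OF \<open>T \<ge> 0\<close>]) blast
  also have "?K * (c * pnorm y powr \<alpha>) * \<delta> powr (1 / (M - 1)) * T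
      = ?K * c * pnorm y powr \<alpha> * T * \<delta> powr (1 / (M - 1))"
    by (simp only: ac_simps)
  finally show ?thesis .
qed

text \<open>Only the cutoff, the growth conditions on a and \<sigma> and the model bound enter: the estimate
  is pointwise in the value of u.\<close>

theorem lemma2p2:
  fixes M N :: real
  assumes "M > 1" and "N \<ge> M + 1"
  shows "\<exists>\<epsilon>0>0. \<forall>\<epsilon>. 0 < \<epsilon> \<and> \<epsilon> < \<epsilon>0 \<longrightarrow> (\<forall>C>0. \<exists>K. \<forall>(\<alpha>::real) (p::real) a \<sigma>
           (\<xi> :: real \<times> (real^'d) \<Rightarrow> real) u0 u Cc \<phi>g (\<delta>::real) (R::real) (T::real) Kset c y.
    (2/3 < \<alpha> \<and> \<alpha> < 1 \<and> M < 1 + (3 * \<alpha> - 2) / (\<alpha> * (2 - \<alpha>)) \<and> p > 1 \<and>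
     a_assms C M a \<and> sigma_assms C N \<sigma> \<and>
     smooth \<xi> \<and> periodic_st \<xi> \<and>
     smooth u0 \<and> periodic_sp u0 \<and> (LINT x : unit_cell | lborel. \<bar>u0 x\<bar> powr p) powr (1 / p) \<le> C \<and>
     classical_solution a \<sigma> \<xi> Cc u0 u \<and>
     cutoff \<phi>g \<and> \<delta> > 0 \<and> R > 0 \<and> T > 0 \<and>
     compact Kset \<and> (\<forall>x\<in>Dom T y. x \<in> Kset \<and> x + y \<in> Kset) \<and>
     IXi_bound \<alpha> \<epsilon> a \<sigma> \<xi> Kset c \<and>
     pnorm y \<le> R)
    \<longrightarrow> (\<integral>\<^sup>+ x \<in> Dom T y. ennreal \<bar>\<sigma> (u x) * ((1 - \<phi>g (a (u x) / \<delta>)) * PiI \<xi> (a (u x)) x (x + y))\<bar> \<partial>lborel)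
        \<le> ennreal (K * c * pnorm y powr \<alpha> * T * \<delta> powr (1 / (M - 1))))"
  apply (rule exI[of _ "1 / (M - 1)"], intro conjI allI impI)
  subgoal
    using assms(1) by simp
  subgoal for \<epsilon> C
    apply (intro exI[of _ "C powr (N + (2 - M) * (1 + \<epsilon>)) * (2 * C) powr (1 / (M - 1))"] allI impI,
        elim conjE)
    apply (rule set_nn_integral_cutoff_le; (assumption | use assms in \<open>auto simp: field_simps\<close>))
    done
  done

end
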